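(* Let $\Sigma$ be a finite alphabet, $M\in\mathbb N$, $Z\subseteq\Sigma^{\mathbb Z}$ a sofic shift of $M$-finite type, $A:\Sigma\to\mathbb R^{n\times n}$, and consider the switched linear system $x(k+1)=A(z_k)x(k)$, $\bar z\in Z$, with solution $\Phi(k,x_0,\bar z)$. Fix $\gamma\in[0,1)$. The following are equivalent: (1) for every $\tilde\gamma\in(\gamma,1)$ the system is uniformly exponentially stable with decay rate $\tilde\gamma$, i.e. there is $c>0$ with $|\Phi(k,x_0,\bar z)|\le c\,\tilde\gamma^k|x_0|$ for all $k\in\mathbb N,x_0\in\mathbb R^n,\bar z\in Z$; (2) for every $\tilde\gamma\in(\gamma,1)$ there exist $K\ge\max(M,1)$, $k\in\{0,\dots,K\}$, $M_1,M_2>0$ and $Q:\Sigma^K\cap\mathcal L(Z)\to\mathbb S^n_+$ such that $M_1I_n\preceq Q(w)\preceq M_2I_n$ for all $w\in S_{K,k}(Z)$ and $A(h)^\top Q(j)A(h)\prec\tilde\gamma^2Q(w)$ for all $(w,j,h)\in E_{K,k}(Z)$.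
   Context: $\Sigma^{\mathbb Z}$: bi-infinite sequences over $\Sigma$; $\mathcal L(Z)$: words $w$ of length $K$ (any $K$) such that some $\bar z\in Z$ has $(z_0,\dots,z_{K-1})=w$; a sofic shift is the set of labels of bi-infinite walks in a finite edge-labeled graph. $Z$ is of $M$-finite type if for all words $u,v,w$: $u\cdot v\in\mathcal L(Z)$, $v\cdot w\in\mathcal L(Z)$, $|v|\ge M$ imply $u\cdot v\cdot w\in\mathcal L(Z)$. For $w=(w_0,\dots,w_{K-1})$, $w^-=(w_0,\dots,w_{K-2})$, $w^+=(w_1,\dots,w_{K-1})$. Generalized De Bruijn graph $\mathcal G_{K,k}(Z)=(S_{K,k}(Z),E_{K,k}(Z))$: nodes $S_{K,k}(Z)=\Sigma^K\cap\mathcal L(Z)$; $(w,j,h)\in E_{K,k}(Z)$ iff $w^+=j^-$, $(w_0,\dots,w_{K-1},j_{K-1})\in\mathcal L(Z)$, and $h=j_{K-1}$ if $k=0$, $h=w_{K-k}$ if $1\le k\le K$. $\mathbb S^n_+$: symmetric positive definite matrices; $\preceq,\prec$ Loewner order. *)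

theory Defs
  imports "HOL-Analysis.Analysis"
begin

definition lang :: "(int \<Rightarrow> 'a) set \<Rightarrow> 'a list set" where
  "lang Z = {w. \<exists>z\<in>Z. \<forall>i<length w. z (int i) = w ! i}"

definition sofic :: "(int \<Rightarrow> 'a) set \<Rightarrow> bool" where
  "sofic Z \<longleftrightarrow> (\<exists>(V::nat set) (E::(nat \<times> 'a \<times> nat) set).
      finite V \<and> finite E \<and> (\<forall>(p,a,q)\<in>E. p \<in> V \<and> q \<in> V) \<and>
      Z = {z. \<exists>p::int \<Rightarrow> nat. \<forall>i. (p i, z i, p (i+1)) \<in> E})"

definition M_finite_type :: "nat \<Rightarrow> (int \<Rightarrow> 'a) set \<Rightarrow> bool" where
  "M_finite_type M Z \<longleftrightarrow> (\<forall>u v w. u @ v \<in> lang Z \<longrightarrow> v @ w \<in> lang Z \<longrightarrow>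
      length v \<ge> M \<longrightarrow> u @ v @ w \<in> lang Z)"

definition dbnodes :: "nat \<Rightarrow> (int \<Rightarrow> 'a) set \<Rightarrow> 'a list set" where
  "dbnodes K Z = {w. length w = K \<and> w \<in> lang Z}"

text \<open>Edges (w, j, h) of the generalized De Bruijn graph G_{K,k}(Z).
  w^+ = tl w, j^- = butlast j, j_{K-1} = last j, w_{K-k} = w ! (K-k).\<close>
definition dbedges :: "nat \<Rightarrow> nat \<Rightarrow> (int \<Rightarrow> 'a) set \<Rightarrow> ('a list \<times> 'a list \<times> 'a) set" where
  "dbedges K k Z = {(w, j, h). w \<in> dbnodes K Z \<and> j \<in> dbnodes K Z \<and>
      tl w = butlast j \<and> w @ [last j] \<in> lang Z \<and>
      (if k = 0 then h = last j else (1 \<le> k \<and> k \<le> K \<and> h = w ! (K - k)))}"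

fun Phi :: "('a \<Rightarrow> real^'n^'n) \<Rightarrow> nat \<Rightarrow> real^'n \<Rightarrow> (int \<Rightarrow> 'a) \<Rightarrow> real^'n" where
  "Phi A 0 x z = x"
| "Phi A (Suc k) x z = A (z (int k)) *v Phi A k x z"

definition psd :: "real^'n^'n \<Rightarrow> bool" where
  "psd P \<longleftrightarrow> transpose P = P \<and> (\<forall>x. 0 \<le> x \<bullet> (P *v x))"

definition pd :: "real^'n^'n \<Rightarrow> bool" where
  "pd P \<longleftrightarrow> transpose P = P \<and> (\<forall>x. x \<noteq> 0 \<longrightarrow> 0 < x \<bullet> (P *v x))"

definition loewner_le :: "real^'n^'n \<Rightarrow> real^'n^'n \<Rightarrow> bool" where
  "loewner_le P Q \<longleftrightarrow> psd (Q - P)"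

definition loewner_less :: "real^'n^'n \<Rightarrow> real^'n^'n \<Rightarrow> bool" where
  "loewner_less P Q \<longleftrightarrow> pd (Q - P)"

end

theory Submission
  imports Defs
begin

text \<open>
  (2) \<Rightarrow> (1): along a trajectory \<open>z\<close>, consecutive length-\<open>K\<close> windows of \<open>z\<close> are joined by an
  edge of \<open>\<G>\<^sub>K\<^sub>,\<^sub>k(Z)\<close> labelled by the symbol that drives the state from time \<open>s + d\<close> to
  \<open>s + d + 1\<close> (with \<open>d \<le> K\<close> depending only on \<open>k\<close>), so \<open>V s = x(s + d)\<^sup>T Q(window s) x(s + d)\<close>
  decays by \<open>\<gamma>'\<^sup>2\<close> per step; the bounds \<open>M\<^sub>1 I \<preceq> Q \<preceq> M\<^sub>2 I\<close> turn this into exponential decay of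
  \<open>x\<close> after time \<open>d\<close>, and a crude bound covers the first \<open>d\<close> steps.

  (1) \<Rightarrow> (2): take \<open>k = K\<close> and the weighted finite-horizon Gramian
  \<open>Q(w) = \<Sum>\<^sub>t\<^sub><\<^sub>K \<gamma>'\<^sup>-\<^sup>2\<^sup>t P\<^sub>w(t)\<^sup>T P\<^sub>w(t)\<close>, where \<open>P\<^sub>w(t) = A(w\<^sub>t\<^sub>-\<^sub>1) \<cdots> A(w\<^sub>0)\<close>. Along an edge the sum
  telescopes, leaving \<open>\<gamma>'\<^sup>2 (|x|\<^sup>2 - \<gamma>'\<^sup>-\<^sup>2\<^sup>K |P\<^sub>w(K) x|\<^sup>2)\<close>, which is positive once \<open>K\<close> is so large
  that decay at a rate \<open>\<rho> < \<gamma>'\<close> beats the constant \<open>c\<close>. Every word of \<open>\<L>(Z)\<close> is read off a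
  point of \<open>Z\<close>, so neither direction uses that \<open>Z\<close> is of \<open>M\<close>-finite type.
\<close>

definition quad_form :: "real^'n^'n \<Rightarrow> real^'n \<Rightarrow> real" where
  "quad_form P x = x \<bullet> (P *v x)"

lemma transpose_diff: "transpose (P - Q) = transpose P - transpose (Q :: 'b::ab_group_add^'n^'m)"
  by (simp add: transpose_def vec_eq_iff)

lemma transpose_sum: "transpose (sum f S) = (\<Sum>i\<in>S. transpose (f i :: 'b::comm_monoid_add^'n^'m))"
  by (simp add: transpose_def vec_eq_iff sum_component)

lemma sum_matrix_vector_mult: "sum f S *v x = (\<Sum>i\<in>S. f i *v x)"
  for f :: "'c \<Rightarrow> real^'n^'m"
  by (induction S rule: infinite_finite_induct) (auto simp: matrix_vector_mult_add_rdistrib)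

lemma mat_matrix_vector_mult: "mat m *v x = m *\<^sub>R (x :: real^'n)"
proof -
  have "mat m = m *\<^sub>R (mat 1 :: real^'n^'n)"
    by (simp add: vec_eq_iff mat_def)
  then show ?thesis
    by (simp add: scaleR_matrix_vector_assoc[symmetric])
qed

lemma inner_vector_matrix: "x \<bullet> (y v* B) = (B *v x) \<bullet> (y :: real^'n)"
  by (metis inner_commute dot_lmul_matrix)

lemma quad_form_scaleR: "quad_form (c *\<^sub>R P) x = c * quad_form P x"
  by (simp add: quad_form_def scaleR_matrix_vector_assoc[symmetric])

lemma quad_form_sum: "quad_form (sum f S) x = (\<Sum>i\<in>S. quad_form (f i) x)"
  by (simp add: quad_form_def sum_matrix_vector_mult inner_sum_right)

lemma quad_form_mat: "quad_form (mat m) x = m * (norm x)\<^sup>2"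
  by (simp add: quad_form_def mat_matrix_vector_mult power2_norm_eq_inner)

lemma quad_form_congruence: "quad_form (transpose B ** Q ** B) x = quad_form Q (B *v x)"
  by (simp add: quad_form_def matrix_vector_mul_assoc[symmetric] inner_vector_matrix
      inner_commute)

lemma quad_form_gram: "quad_form (transpose B ** B) x = (norm (B *v x))\<^sup>2"
  by (simp add: quad_form_def matrix_vector_mul_assoc[symmetric] inner_vector_matrix
      power2_norm_eq_inner)

lemma loewner_le_iff:
  "loewner_le P Q \<longleftrightarrow> transpose (Q - P) = Q - P \<and> (\<forall>x. quad_form P x \<le> quad_form Q x)"
  by (simp add: loewner_le_def psd_def quad_form_def matrix_vector_mult_diff_rdistrib
      inner_diff_right)

lemma loewner_less_iff:
  "loewner_less P Q \<longleftrightarrow>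
     transpose (Q - P) = Q - P \<and> (\<forall>x. x \<noteq> 0 \<longrightarrow> quad_form P x < quad_form Q x)"
  by (simp add: loewner_less_def pd_def quad_form_def matrix_vector_mult_diff_rdistrib
      inner_diff_right)

lemma loewner_le_quad_form: "loewner_le P Q \<Longrightarrow> quad_form P x \<le> quad_form Q x"
  by (simp add: loewner_le_iff)

lemma loewner_leI:
  assumes "transpose P = P" "transpose Q = Q" "\<And>x. quad_form P x \<le> quad_form Q x"
  shows "loewner_le P Q"
  using assms by (simp add: loewner_le_iff transpose_diff)

lemma loewner_lessI:
  assumes "transpose P = P" "transpose Q = Q" "\<And>x. x \<noteq> 0 \<Longrightarrow> quad_form P x < quad_form Q x"
  shows "loewner_less P Q"
  using assms by (simp add: loewner_less_iff transpose_diff)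

lemma loewner_less_quad_form: "loewner_less P Q \<Longrightarrow> quad_form P x \<le> quad_form Q x"
  by (cases "x = 0") (auto simp: loewner_less_iff quad_form_def intro: less_imp_le)

lemma pd_if_loewner_le_mat:
  assumes "0 < m" "loewner_le (mat m) Q"
  shows "pd Q"
proof -
  have "transpose Q = Q"
    using assms(2) by (simp add: loewner_le_iff transpose_diff)
  moreover have "0 < quad_form Q x" if "x \<noteq> 0" for x
    using assms that by (simp add: loewner_le_iff quad_form_mat)
      (smt (verit) mult_pos_pos zero_less_power2 zero_less_norm_iff)
  ultimately show ?thesis by (simp add: pd_def quad_form_def)
qed

fun word_matrix :: "('a \<Rightarrow> real^'n^'n) \<Rightarrow> 'a list \<Rightarrow> nat \<Rightarrow> real^'n^'n" where
  "word_matrix A w 0 = mat 1"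
| "word_matrix A w (Suc t) = A (w ! t) ** word_matrix A w t"

lemma word_matrix_Cons: "word_matrix A (a # w) (Suc t) = word_matrix A w t ** A a"
  by (induction t) (auto simp: matrix_mul_assoc)

lemma word_matrix_append: "t \<le> length u \<Longrightarrow> word_matrix A (u @ v) t = word_matrix A u t"
  by (induction t) (auto simp: nth_append)

lemma word_matrix_eq_Phi:
  "(\<forall>i<t. z (int i) = w ! i) \<Longrightarrow> word_matrix A w t *v x = Phi A t x z"
  by (induction t) (auto simp: matrix_vector_mul_assoc[symmetric])

lemma word_matrix_in_lang_eq_Phi:
  assumes "w \<in> lang Z" "t \<le> length w"
  obtains z where "z \<in> Z" "word_matrix A w t *v x = Phi A t x z"
proof -
  obtain z where "z \<in> Z" "\<forall>i<length w. z (int i) = w ! i"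
    using assms(1) unfolding lang_def by blast
  with assms(2) that show thesis
    using word_matrix_eq_Phi[of t z w A x] by auto
qed

lemma Phi_norm_le_pow:
  assumes "\<And>a x. norm (A a *v x) \<le> B * norm x" "0 \<le> B"
  shows "norm (Phi A t x z) \<le> B ^ t * norm x"
proof (induction t)
  case (Suc t)
  have "norm (Phi A (Suc t) x z) \<le> B * norm (Phi A t x z)"
    using assms(1) by simp
  also have "\<dots> \<le> B * (B ^ t * norm x)"
    using Suc assms(2) by (intro mult_left_mono)
  finally show ?case by simp
qed simp

lemma sofic_shift_closed:
  assumes "sofic Z" "z \<in> Z"
  shows "(\<lambda>i. z (i + int s)) \<in> Z"
proof -
  obtain E :: "(nat \<times> 'a \<times> nat) set"
    where Z: "Z = {z. \<exists>p::int \<Rightarrow> nat. \<forall>i. (p i, z i, p (i + 1)) \<in> E}"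
    using assms(1) unfolding sofic_def by blast
  then obtain p where p: "\<forall>i. (p i, z i, p (i + 1)) \<in> E"
    using assms(2) by blast
  have "(p (i + int s), z (i + int s), p (i + 1 + int s)) \<in> E" for i
    using p[rule_format, of "i + int s"] by (simp add: ac_simps)
  then show ?thesis
    unfolding Z by (intro CollectI exI[of _ "\<lambda>i. p (i + int s)"]) simp
qed

definition window :: "(int \<Rightarrow> 'a) \<Rightarrow> nat \<Rightarrow> nat \<Rightarrow> 'a list" where
  "window z s L = map (\<lambda>i. z (int (s + i))) [0..<L]"

lemma length_window [simp]: "length (window z s L) = L"
  by (simp add: window_def)

lemma window_in_lang:
  assumes "sofic Z" "z \<in> Z"
  shows "window z s L \<in> lang Z"
  unfolding lang_def window_def
  using sofic_shift_closed[OF assms, of s] by (force simp: add.commute)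

text \<open>Position, relative to the start of \<open>w\<close>, of the label \<open>h\<close> of an edge \<open>(w, j, h)\<close> of
  \<open>\<G>\<^sub>K\<^sub>,\<^sub>k(Z)\<close> along a trajectory: \<open>h = j\<^sub>K\<^sub>-\<^sub>1\<close> sits one past the end of \<open>w\<close> if \<open>k = 0\<close>,
  and \<open>h = w\<^sub>K\<^sub>-\<^sub>k\<close> otherwise.\<close>
definition label_offset :: "nat \<Rightarrow> nat \<Rightarrow> nat" where
  "label_offset K k = (if k = 0 then K else K - k)"

lemma window_dbedge:
  assumes "sofic Z" "z \<in> Z" "1 \<le> K" "k \<le> K"
  shows "(window z s K, window z (Suc s) K, z (int (s + label_offset K k))) \<in> dbedges K k Z"
proof -
  obtain K' where K': "K = Suc K'"
    using assms(3) by (cases K) auto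
  have last: "last (window z (Suc s) K) = z (int (s + K))"
    by (simp add: window_def K')
  have "tl (window z s K) = butlast (window z (Suc s) K)"
    by (rule nth_equalityI) (auto simp: window_def nth_tl nth_butlast intro!: arg_cong[where f = z])
  moreover have "window z s K @ [last (window z (Suc s) K)] \<in> lang Z"
    using window_in_lang[OF assms(1,2), of s "Suc K"] unfolding last by (simp add: window_def)
  moreover have "window z s K \<in> dbnodes K Z" "window z (Suc s) K \<in> dbnodes K Z"
    by (simp_all add: dbnodes_def window_in_lang[OF assms(1,2)])
  moreover have "if k = 0 then z (int (s + label_offset K k)) = last (window z (Suc s) K)
      else 1 \<le> k \<and> k \<le> K \<and> z (int (s + label_offset K k)) = window z s K ! (K - k)"
    using assms(4) unfolding last by (simp add: label_offset_def window_def add_diff_eq)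
  ultimately show ?thesis
    unfolding dbedges_def by (simp only: mem_Collect_eq case_prod_conv)
qed

definition exp_stable :: "('a \<Rightarrow> real^'n^'n) \<Rightarrow> (int \<Rightarrow> 'a) set \<Rightarrow> real \<Rightarrow> bool" where
  "exp_stable A Z \<rho> \<longleftrightarrow>
     (\<exists>c>0. \<forall>k x0. \<forall>z\<in>Z. norm (Phi A k x0 z) \<le> c * \<rho> ^ k * norm x0)"

definition db_lyapunov ::
    "('a \<Rightarrow> real^'n^'n) \<Rightarrow> (int \<Rightarrow> 'a) set \<Rightarrow> real \<Rightarrow> nat \<Rightarrow> nat \<Rightarrow> real \<Rightarrow> real
      \<Rightarrow> ('a list \<Rightarrow> real^'n^'n) \<Rightarrow> bool" where
  "db_lyapunov A Z \<gamma> K k M1 M2 Q \<longleftrightarrow>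
     k \<le> K \<and> M1 > 0 \<and> M2 > 0 \<and>
     (\<forall>w\<in>dbnodes K Z. pd (Q w) \<and> loewner_le (mat M1) (Q w) \<and> loewner_le (Q w) (mat M2)) \<and>
     (\<forall>(w, j, h)\<in>dbedges K k Z.
        loewner_less (transpose (A h) ** Q j ** A h) (\<gamma>\<^sup>2 *\<^sub>R Q w))"

definition db_gramian :: "('a \<Rightarrow> real^'n^'n) \<Rightarrow> real \<Rightarrow> nat \<Rightarrow> 'a list \<Rightarrow> real^'n^'n" where
  "db_gramian A \<mu> K w = (\<Sum>t<K. \<mu> ^ t *\<^sub>R (transpose (word_matrix A w t) ** word_matrix A w t))"

lemma transpose_db_gramian: "transpose (db_gramian A \<mu> K w) = db_gramian A \<mu> K w"
  by (simp add: db_gramian_def transpose_sum transpose_scalar matrix_transpose_mul)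

lemma quad_form_db_gramian:
  "quad_form (db_gramian A \<mu> K w) x = (\<Sum>t<K. \<mu> ^ t * (norm (word_matrix A w t *v x))\<^sup>2)"
  by (simp add: db_gramian_def quad_form_sum quad_form_scaleR quad_form_gram)

lemma quad_form_db_gramian_shift:
  assumes "length (a # v) = K"
  shows "\<mu> * quad_form (db_gramian A \<mu> K (v @ [b])) (A a *v x) =
    quad_form (db_gramian A \<mu> K (a # v)) x - (norm x)\<^sup>2
    + \<mu> ^ K * (norm (word_matrix A (a # v) K *v x))\<^sup>2"
proof -
  define f where "f t = \<mu> ^ t * (norm (word_matrix A (a # v) t *v x))\<^sup>2" for t
  have "word_matrix A (v @ [b]) t *v (A a *v x) = word_matrix A (a # v) (Suc t) *v x"
    if "t < K" for t
    using that assms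
    by (simp add: word_matrix_Cons word_matrix_append matrix_vector_mul_assoc
        del: word_matrix.simps(2))
  then have "\<mu> * quad_form (db_gramian A \<mu> K (v @ [b])) (A a *v x) = (\<Sum>t<K. f (Suc t))"
    by (simp add: quad_form_db_gramian sum_distrib_left f_def mult.assoc)
  also have "\<dots> = (\<Sum>t<Suc K. f t) - f 0"
    unfolding sum.lessThan_Suc_shift by simp
  also have "\<dots> = quad_form (db_gramian A \<mu> K (a # v)) x - (norm x)\<^sup>2 + f K"
    by (simp add: quad_form_db_gramian f_def)
  finally show ?thesis
    by (simp add: f_def)
qed

lemma db_gramian_bounds:
  assumes "0 < \<mu>" "1 \<le> K"
    and "\<And>t x. t < K \<Longrightarrow> \<mu> ^ t * (norm (word_matrix A w t *v x))\<^sup>2 \<le> C * (norm x)\<^sup>2"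
  shows "loewner_le (mat 1) (db_gramian A \<mu> K w)"
    and "loewner_le (db_gramian A \<mu> K w) (mat (real K * C))"
proof -
  show "loewner_le (mat 1) (db_gramian A \<mu> K w)"
  proof (rule loewner_leI)
    fix x
    have "\<mu> ^ 0 * (norm (word_matrix A w 0 *v x))\<^sup>2
        \<le> (\<Sum>t<K. \<mu> ^ t * (norm (word_matrix A w t *v x))\<^sup>2)"
      using assms(1,2) by (intro member_le_sum) auto
    then show "quad_form (mat 1) x \<le> quad_form (db_gramian A \<mu> K w) x"
      by (simp add: quad_form_mat quad_form_db_gramian)
  qed (simp_all add: transpose_db_gramian)
  show "loewner_le (db_gramian A \<mu> K w) (mat (real K * C))"
  proof (rule loewner_leI)
    fix x
    have "(\<Sum>t<K. \<mu> ^ t * (norm (word_matrix A w t *v x))\<^sup>2) \<le> (\<Sum>t<K. C * (norm x)\<^sup>2)"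
      using assms(3) by (intro sum_mono) auto
    then show "quad_form (db_gramian A \<mu> K w) x \<le> quad_form (mat (real K * C)) x"
      by (simp add: quad_form_mat quad_form_db_gramian)
  qed (simp_all add: transpose_db_gramian)
qed

lemma db_gramian_dbedge:
  fixes A :: "'a \<Rightarrow> real^'n^'n"
  assumes "(w, j, h) \<in> dbedges K K Z" "1 \<le> K" "0 < \<gamma>"
    and "\<And>x. x \<noteq> 0 \<Longrightarrow> (norm (word_matrix A w K *v x))\<^sup>2 < (\<gamma>\<^sup>2) ^ K * (norm x)\<^sup>2"
  shows "loewner_less (transpose (A h) ** db_gramian A (1 / \<gamma>\<^sup>2) K j ** A h)
      (\<gamma>\<^sup>2 *\<^sub>R db_gramian A (1 / \<gamma>\<^sup>2) K w)"
proof -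
  define \<mu> where "\<mu> = 1 / \<gamma>\<^sup>2"
  obtain a v where w: "w = a # v" and h: "h = a"
    using assms(1,2) by (cases w) (auto simp: dbedges_def dbnodes_def)
  have "length w = K" "length j = K" "tl w = butlast j"
    using assms(1) by (auto simp: dbedges_def dbnodes_def)
  then have j: "j = v @ [last j]"
    using assms(2) w by (metis append_butlast_last_id list.sel(3) list.size(3) not_one_le_zero)
  show ?thesis
    unfolding \<mu>_def[symmetric]
  proof (rule loewner_lessI)
    fix x :: "real^'n"
    assume "x \<noteq> 0"
    have "\<mu> ^ K * (norm (word_matrix A w K *v x))\<^sup>2 < (norm x)\<^sup>2"
      using assms(3) assms(4)[OF \<open>x \<noteq> 0\<close>]
      by (simp add: \<mu>_def field_simps power_one_over)
    then have "\<mu> * quad_form (db_gramian A \<mu> K j) (A h *v x) < quad_form (db_gramian A \<mu> K w) x"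
      using quad_form_db_gramian_shift[of a v K \<mu> A "last j" x] \<open>length w = K\<close> w h j by simp
    then show "quad_form (transpose (A h) ** db_gramian A \<mu> K j ** A h) x
        < quad_form (\<gamma>\<^sup>2 *\<^sub>R db_gramian A \<mu> K w) x"
      using assms(3) by (simp add: quad_form_congruence quad_form_scaleR \<mu>_def field_simps)
  qed (simp_all add: transpose_db_gramian transpose_scalar matrix_transpose_mul matrix_mul_assoc)
qed

lemma eventually_pow_less:
  fixes r :: real
  assumes "0 \<le> r" "r < 1" "0 < e"
  shows "\<exists>K\<ge>N. r ^ K < e"
proof -
  have "\<forall>\<^sub>F K in sequentially. r ^ K < e"
    using LIMSEQ_power_zero[of r] assms by (auto intro: order_tendstoD(2))
  then obtain K0 where "\<forall>K\<ge>K0. r ^ K < e"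
    unfolding eventually_sequentially by blast
  then show ?thesis
    by (intro exI[of _ "max N K0"]) simp
qed

lemma word_matrix_norm_le:
  assumes "\<forall>k x0. \<forall>z\<in>Z. norm (Phi A k x0 z) \<le> c * \<rho> ^ k * norm x0"
    and "w \<in> lang Z" "t \<le> length w"
  shows "norm (word_matrix A w t *v x) \<le> c * \<rho> ^ t * norm x"
  using assms by (auto elim: word_matrix_in_lang_eq_Phi[where A = A and x = x])

lemma exp_stable_imp_db_lyapunov:
  fixes A :: "'a \<Rightarrow> real^'n^'n"
  assumes "exp_stable A Z \<rho>" "0 \<le> \<rho>" "\<rho> < \<gamma>"
  shows "\<exists>K\<ge>N. \<exists>k M1 M2 Q. db_lyapunov A Z \<gamma> K k M1 M2 Q"
proof -
  obtain c where "c > 0" and c: "\<forall>k x0. \<forall>z\<in>Z. norm (Phi A k x0 z) \<le> c * \<rho> ^ k * norm x0"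
    using assms(1) unfolding exp_stable_def by blast
  have "0 < \<gamma>"
    using assms(2,3) by linarith
  define r where "r = (\<rho> / \<gamma>)\<^sup>2"
  define \<mu> where "\<mu> = 1 / \<gamma>\<^sup>2"
  have "0 \<le> r" "r < 1"
    using assms(2,3) \<open>0 < \<gamma>\<close> by (auto simp: r_def power_less_one_iff)
  then obtain K where K: "max N 1 \<le> K" and "r ^ K < 1 / c\<^sup>2"
    using eventually_pow_less[of r "1 / c\<^sup>2" "max N 1"] \<open>c > 0\<close> by auto
  then have rK: "c\<^sup>2 * r ^ K < 1"
    using \<open>c > 0\<close> by (simp add: field_simps)
  have word_bound: "\<mu> ^ t * (norm (word_matrix A w t *v x))\<^sup>2 \<le> c\<^sup>2 * r ^ t * (norm x)\<^sup>2"
    if "w \<in> dbnodes K Z" "t \<le> K" for w t x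
  proof -
    have "(norm (word_matrix A w t *v x))\<^sup>2 \<le> (c * \<rho> ^ t * norm x)\<^sup>2"
      using word_matrix_norm_le[OF c, of w t x] that by (intro power_mono) (auto simp: dbnodes_def)
    then have "\<mu> ^ t * (norm (word_matrix A w t *v x))\<^sup>2 \<le> \<mu> ^ t * (c * \<rho> ^ t * norm x)\<^sup>2"
      by (intro mult_left_mono) (auto simp: \<mu>_def)
    also have "\<dots> = c\<^sup>2 * r ^ t * (norm x)\<^sup>2"
      by (simp add: \<mu>_def r_def power_mult_distrib power_divide field_simps flip: power_mult)
    finally show ?thesis .
  qed
  have "c\<^sup>2 * r ^ t \<le> c\<^sup>2" for t
    using \<open>0 \<le> r\<close> \<open>r < 1\<close> by (simp add: mult_left_le power_le_one)
  then have "\<mu> ^ t * (norm (word_matrix A w t *v x))\<^sup>2 \<le> c\<^sup>2 * (norm x)\<^sup>2"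
    if "w \<in> dbnodes K Z" "t < K" for w t x
    using word_bound[of w t x] that by (meson less_imp_le mult_right_mono order_trans zero_le_power2)
  then have nodes: "loewner_le (mat 1) (db_gramian A \<mu> K w)"
    "loewner_le (db_gramian A \<mu> K w) (mat (real K * c\<^sup>2))" if "w \<in> dbnodes K Z" for w
    using db_gramian_bounds[of \<mu> K A w "c\<^sup>2"] that K \<open>0 < \<gamma>\<close> by (auto simp: \<mu>_def)
  have edges: "loewner_less (transpose (A h) ** db_gramian A \<mu> K j ** A h)
      (\<gamma>\<^sup>2 *\<^sub>R db_gramian A \<mu> K w)" if "(w, j, h) \<in> dbedges K K Z" for w j h
    unfolding \<mu>_def
  proof (rule db_gramian_dbedge[OF that _ \<open>0 < \<gamma>\<close>])
    fix x :: "real^'n"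
    assume "x \<noteq> 0"
    have "\<mu> ^ K * (norm (word_matrix A w K *v x))\<^sup>2 \<le> c\<^sup>2 * r ^ K * (norm x)\<^sup>2"
      using that by (simp add: word_bound dbedges_def)
    also have "\<dots> < (norm x)\<^sup>2"
      using rK \<open>x \<noteq> 0\<close> by simp
    finally show "(norm (word_matrix A w K *v x))\<^sup>2 < (\<gamma>\<^sup>2) ^ K * (norm x)\<^sup>2"
      using \<open>0 < \<gamma>\<close> by (simp add: \<mu>_def field_simps power_one_over)
  qed (use K in simp)
  have "db_lyapunov A Z \<gamma> K K 1 (real K * c\<^sup>2) (db_gramian A \<mu> K)"
    using nodes edges \<open>c > 0\<close> K
    unfolding db_lyapunov_def by (auto intro: pd_if_loewner_le_mat[OF zero_less_one])
  with K show ?thesis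
    by (metis max.boundedE)
qed

lemma db_lyapunov_decay:
  fixes A :: "'a \<Rightarrow> real^'n^'n"
  assumes "sofic Z" "z \<in> Z" "1 \<le> K" "db_lyapunov A Z \<gamma> K k M1 M2 Q"
  defines "d \<equiv> label_offset K k"
  shows "(norm (Phi A (s + d) x z))\<^sup>2 \<le> M2 / M1 * (\<gamma>\<^sup>2) ^ s * (norm (Phi A d x z))\<^sup>2"
proof -
  have "k \<le> K" "0 < M1"
    and nodes: "\<And>w. w \<in> dbnodes K Z \<Longrightarrow> loewner_le (mat M1) (Q w) \<and> loewner_le (Q w) (mat M2)"
    and edges: "\<And>w j h. (w, j, h) \<in> dbedges K k Z \<Longrightarrow>
      loewner_less (transpose (A h) ** Q j ** A h) (\<gamma>\<^sup>2 *\<^sub>R Q w)"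
    using assms(4) unfolding db_lyapunov_def by auto
  define V where "V s = quad_form (Q (window z s K)) (Phi A (s + d) x z)" for s
  have step: "V (Suc s) \<le> \<gamma>\<^sup>2 * V s" for s
  proof -
    let ?h = "z (int (s + d))"
    have "loewner_less (transpose (A ?h) ** Q (window z (Suc s) K) ** A ?h)
        (\<gamma>\<^sup>2 *\<^sub>R Q (window z s K))"
      using edges window_dbedge[OF assms(1-3) \<open>k \<le> K\<close>] by (simp add: d_def)
    from loewner_less_quad_form[OF this, of "Phi A (s + d) x z"] show ?thesis
      by (simp add: V_def quad_form_congruence quad_form_scaleR)
  qed
  have decay: "V s \<le> (\<gamma>\<^sup>2) ^ s * V 0" for s
  proof (induction s)
    case (Suc s)
    have "V (Suc s) \<le> \<gamma>\<^sup>2 * V s"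
      by (rule step)
    also have "\<dots> \<le> \<gamma>\<^sup>2 * ((\<gamma>\<^sup>2) ^ s * V 0)"
      using Suc by (intro mult_left_mono) auto
    finally show ?case
      by (simp add: mult.assoc)
  qed simp
  have window_nodes: "window z s K \<in> dbnodes K Z" for s
    by (simp add: dbnodes_def window_in_lang[OF assms(1,2)])
  have lower: "M1 * (norm (Phi A (s + d) x z))\<^sup>2 \<le> V s"
    using loewner_le_quad_form[OF conjunct1[OF nodes[OF window_nodes]]]
    by (simp add: V_def quad_form_mat)
  have upper: "V 0 \<le> M2 * (norm (Phi A d x z))\<^sup>2"
    using loewner_le_quad_form[OF conjunct2[OF nodes[OF window_nodes]]]
    by (simp add: V_def quad_form_mat)
  have "M1 * (norm (Phi A (s + d) x z))\<^sup>2 \<le> (\<gamma>\<^sup>2) ^ s * (M2 * (norm (Phi A d x z))\<^sup>2)"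
    using lower decay[of s] upper by (meson order_trans mult_left_mono zero_le_power zero_le_power2)
  then show ?thesis
    using \<open>0 < M1\<close> by (simp add: field_simps)
qed

lemma db_lyapunov_norm_bound:
  fixes A :: "'a \<Rightarrow> real^'n^'n"
  assumes "sofic Z" "z \<in> Z" "1 \<le> K" "db_lyapunov A Z \<gamma> K k M1 M2 Q" "0 \<le> \<gamma>"
    and "\<And>a x. norm (A a *v x) \<le> B * norm x" "0 \<le> B"
  defines "d \<equiv> label_offset K k"
  shows "norm (Phi A (s + d) x z) \<le> sqrt (M2 / M1) * B ^ d * \<gamma> ^ s * norm x"
proof -
  have "0 < M1" "0 < M2"
    using assms(4) by (simp_all add: db_lyapunov_def)
  have "(norm (Phi A (s + d) x z))\<^sup>2 \<le> M2 / M1 * (\<gamma>\<^sup>2) ^ s * (norm (Phi A d x z))\<^sup>2"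
    using db_lyapunov_decay[OF assms(1-4)] by (simp add: d_def)
  also have "\<dots> \<le> M2 / M1 * (\<gamma>\<^sup>2) ^ s * (B ^ d * norm x)\<^sup>2"
    using \<open>0 < M1\<close> \<open>0 < M2\<close> Phi_norm_le_pow[of A B d x z] assms(6,7)
    by (intro mult_left_mono power_mono) auto
  also have "\<dots> = (sqrt (M2 / M1) * B ^ d * \<gamma> ^ s * norm x)\<^sup>2"
    using \<open>0 < M1\<close> \<open>0 < M2\<close> by (simp add: power_mult_distrib mult_ac flip: power_mult)
  finally show ?thesis
    by (rule power2_le_imp_le) (use assms(5,7) \<open>0 < M1\<close> \<open>0 < M2\<close> in simp)
qed

lemma finite_family_matrix_bound:
  fixes A :: "'a::finite \<Rightarrow> real^'n^'m"
  shows "\<exists>B\<ge>b. \<forall>a x. norm (A a *v x) \<le> B * norm x"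
proof -
  define B where "B = max b 0 + (\<Sum>a\<in>UNIV. onorm ((*v) (A a)))"
  have "onorm ((*v) (A a)) \<le> (\<Sum>a\<in>UNIV. onorm ((*v) (A a)))" for a
    by (rule member_le_sum) (simp_all add: onorm_pos_le[OF matrix_vector_mul_bounded_linear])
  then have "onorm ((*v) (A a)) \<le> B" for a
    by (simp add: B_def add_increasing)
  then have "norm (A a *v x) \<le> B * norm x" for a x
    using onorm[OF matrix_vector_mul_bounded_linear, of "A a" x]
    by (meson mult_right_mono norm_ge_zero order_trans)
  moreover have "b \<le> B"
    unfolding B_def by (intro add_increasing2 sum_nonneg onorm_pos_le matrix_vector_mul_bounded_linear) auto
  ultimately show ?thesis
    by blast
qed

lemma db_lyapunov_imp_exp_stable:
  fixes A :: "'a::finite \<Rightarrow> real^'n^'n"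
  assumes "sofic Z" "0 < \<gamma>" "1 \<le> K" "db_lyapunov A Z \<gamma> K k M1 M2 Q"
  shows "exp_stable A Z \<gamma>"
proof -
  obtain B where "\<gamma> \<le> B" and B_bound: "\<And>a x. norm (A a *v x) \<le> B * norm x"
    using finite_family_matrix_bound by blast
  then have "0 < B"
    using \<open>0 < \<gamma>\<close> by linarith
  define d where "d = label_offset K k"
  define R where "R = sqrt (M2 / M1)"
  define c where "c = (1 + R) * (B / \<gamma>) ^ d"
  have "0 \<le> R"
    using assms(4) by (simp add: R_def db_lyapunov_def)
  have B_pow: "B ^ t = (B / \<gamma>) ^ t * \<gamma> ^ t" for t
    using \<open>0 < \<gamma>\<close> by (simp add: power_divide)
  have "norm (Phi A t x z) \<le> c * \<gamma> ^ t * norm x" if "z \<in> Z" for t x z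
  proof (cases "d \<le> t")
    case True
    then obtain s where t: "t = s + d"
      by (metis add.commute le_add_diff_inverse)
    have "norm (Phi A t x z) \<le> R * B ^ d * \<gamma> ^ s * norm x"
      using db_lyapunov_norm_bound[OF assms(1) that assms(3,4) _ B_bound] \<open>0 < \<gamma>\<close> \<open>0 < B\<close>
      by (simp add: t d_def R_def)
    also have "\<dots> = R * (B / \<gamma>) ^ d * \<gamma> ^ t * norm x"
      by (simp add: t power_add B_pow[of d])
    also have "\<dots> \<le> c * \<gamma> ^ t * norm x"
      using \<open>0 < \<gamma>\<close> \<open>0 < B\<close> by (intro mult_right_mono) (auto simp: c_def)
    finally show ?thesis .
  next
    case False
    have "norm (Phi A t x z) \<le> (B / \<gamma>) ^ t * \<gamma> ^ t * norm x"
      using Phi_norm_le_pow[of A B t x z] B_bound \<open>0 < B\<close> by (simp only: B_pow)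
    also have "\<dots> \<le> (B / \<gamma>) ^ d * \<gamma> ^ t * norm x"
      using False \<open>\<gamma> \<le> B\<close> \<open>0 < \<gamma>\<close> by (intro mult_right_mono power_increasing) auto
    also have "\<dots> \<le> c * \<gamma> ^ t * norm x"
      using \<open>0 < \<gamma>\<close> \<open>0 < B\<close> \<open>0 \<le> R\<close> by (intro mult_right_mono) (auto simp: c_def)
    finally show ?thesis .
  qed
  moreover have "0 < c"
    using \<open>0 < B\<close> \<open>0 < \<gamma>\<close> \<open>0 \<le> R\<close> by (simp add: c_def add_pos_nonneg)
  ultimately show ?thesis
    unfolding exp_stable_def by blast
qed

theorem mainTheorem11:
  fixes Z :: "(int \<Rightarrow> 'a::finite) set"
    and M :: nat
    and A :: "'a \<Rightarrow> real^'n^'n"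
    and \<gamma> :: real
  assumes "sofic Z"
    and "M_finite_type M Z"
    and "0 \<le> \<gamma>" and "\<gamma> < 1"
  shows "(\<forall>\<gamma>'. \<gamma> < \<gamma>' \<and> \<gamma>' < 1 \<longrightarrow>
            (\<exists>c>0. \<forall>k x0. \<forall>z\<in>Z. norm (Phi A k x0 z) \<le> c * \<gamma>' ^ k * norm x0))
     \<longleftrightarrow>
         (\<forall>\<gamma>'. \<gamma> < \<gamma>' \<and> \<gamma>' < 1 \<longrightarrow>
            (\<exists>K k M1 M2 (Q :: 'a list \<Rightarrow> real^'n^'n).
               K \<ge> max M 1 \<and> k \<le> K \<and> M1 > 0 \<and> M2 > 0 \<and>
               (\<forall>w\<in>dbnodes K Z. pd (Q w) \<and>
                   loewner_le (mat M1) (Q w) \<and> loewner_le (Q w) (mat M2)) \<and>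
               (\<forall>(w, j, h)\<in>dbedges K k Z.
                   loewner_less (transpose (A h) ** Q j ** A h) (\<gamma>'\<^sup>2 *\<^sub>R Q w))))"
proof -
  have "(\<forall>\<gamma>'. \<gamma> < \<gamma>' \<and> \<gamma>' < 1 \<longrightarrow> exp_stable A Z \<gamma>') \<longleftrightarrow>
    (\<forall>\<gamma>'. \<gamma> < \<gamma>' \<and> \<gamma>' < 1 \<longrightarrow>
      (\<exists>K k M1 M2 Q. K \<ge> max M 1 \<and> db_lyapunov A Z \<gamma>' K k M1 M2 Q))"
  proof (intro iffI allI impI)
    fix \<gamma>'
    assume "\<forall>\<gamma>'. \<gamma> < \<gamma>' \<and> \<gamma>' < 1 \<longrightarrow> exp_stable A Z \<gamma>'" and \<gamma>': "\<gamma> < \<gamma>' \<and> \<gamma>' < 1"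
    then have "exp_stable A Z ((\<gamma> + \<gamma>') / 2)"
      by simp
    with \<gamma>' assms(3) show "\<exists>K k M1 M2 Q. K \<ge> max M 1 \<and> db_lyapunov A Z \<gamma>' K k M1 M2 Q"
      using exp_stable_imp_db_lyapunov[of A Z "(\<gamma> + \<gamma>') / 2" \<gamma>' "max M 1"] by auto
  next
    fix \<gamma>'
    assume "\<forall>\<gamma>'. \<gamma> < \<gamma>' \<and> \<gamma>' < 1 \<longrightarrow>
        (\<exists>K k M1 M2 Q. K \<ge> max M 1 \<and> db_lyapunov A Z \<gamma>' K k M1 M2 Q)"
      and \<gamma>': "\<gamma> < \<gamma>' \<and> \<gamma>' < 1"
    then obtain K k M1 M2 Q where "K \<ge> max M 1" "db_lyapunov A Z \<gamma>' K k M1 M2 Q"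
      by blast
    with \<gamma>' assms(3) show "exp_stable A Z \<gamma>'"
      by (intro db_lyapunov_imp_exp_stable[OF assms(1), of \<gamma>' K]) auto
  qed
  then show ?thesis
    unfolding exp_stable_def db_lyapunov_def .
qed

end
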